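(* Let $G$ be a finite simple graph on the vertex set $V(G)=\{x_{11},\ldots,x_{n1}\}$ with no isolated vertex. Let $G_1,\ldots,G_n$ be connected finite simple graphs on vertex sets $V(G_i)=\{x_{i1},\ldots,x_{im_i}\}$ with $m_i\geq 2$ for every $i$, where the sets $V(G_i)\setminus\{x_{i1}\}$ are pairwise disjoint and disjoint from $V(G)$. Let $G(G_1,\ldots,G_n)$ be the graph obtained by attaching $G_i$ to $G$ at $x_{i1}$ for every $i$. Then $G(G_1,\ldots,G_n)$ is unmixed if and only if $G_i$ and $G_i\setminus\{x_{i1}\}$ are unmixed for every $i=1,\ldots,n$.
   Context: $G(G_1,\ldots,G_n)$ has vertex set $\bigcup_i V(G_i)$ and edge set $E(G)\cup\bigcup_i E(G_i)$. For a vertex $v$, $H\setminus\{v\}$ denotes the induced subgraph on $V(H)\setminus\{v\}$. A graph is unmixed if all its maximal independent sets have the same cardinality. *)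

theory Defs
  imports Main
begin

definition simple_graph :: "'a set \<Rightarrow> 'a set set \<Rightarrow> bool" where
  "simple_graph V E \<longleftrightarrow> finite V \<and> (\<forall>e\<in>E. e \<subseteq> V \<and> card e = 2)"

definition adjacent :: "'a set set \<Rightarrow> 'a \<Rightarrow> 'a \<Rightarrow> bool" where
  "adjacent E u v \<longleftrightarrow> {u, v} \<in> E"

definition connected_graph :: "'a set \<Rightarrow> 'a set set \<Rightarrow> bool" where
  "connected_graph V E \<longleftrightarrow> V \<noteq> {} \<and>
     (\<forall>u\<in>V. \<forall>v\<in>V. (\<lambda>x y. adjacent E x y \<and> x \<in> V \<and> y \<in> V)\<^sup>*\<^sup>* u v)"

definition no_isolated_vertex :: "'a set \<Rightarrow> 'a set set \<Rightarrow> bool" where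
  "no_isolated_vertex V E \<longleftrightarrow> (\<forall>v\<in>V. \<exists>e\<in>E. v \<in> e)"

definition independent_set :: "'a set \<Rightarrow> 'a set set \<Rightarrow> 'a set \<Rightarrow> bool" where
  "independent_set V E S \<longleftrightarrow> S \<subseteq> V \<and> (\<forall>e\<in>E. \<not> e \<subseteq> S)"

definition maximal_independent_set :: "'a set \<Rightarrow> 'a set set \<Rightarrow> 'a set \<Rightarrow> bool" where
  "maximal_independent_set V E S \<longleftrightarrow> independent_set V E S \<and>
     (\<forall>T. independent_set V E T \<and> S \<subseteq> T \<longrightarrow> T = S)"

definition unmixed :: "'a set \<Rightarrow> 'a set set \<Rightarrow> bool" where
  "unmixed V E \<longleftrightarrow> (\<forall>S T. maximal_independent_set V E S \<and> maximal_independent_set V E T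
      \<longrightarrow> card S = card T)"

definition del_vertex_V :: "'a set \<Rightarrow> 'a \<Rightarrow> 'a set" where
  "del_vertex_V V v = V - {v}"

definition del_vertex_E :: "'a set set \<Rightarrow> 'a \<Rightarrow> 'a set set" where
  "del_vertex_E E v = {e \<in> E. v \<notin> e}"

definition attach_V :: "nat \<Rightarrow> 'a set \<Rightarrow> (nat \<Rightarrow> 'a set) \<Rightarrow> 'a set" where
  "attach_V n V Vs = V \<union> (\<Union>i\<in>{1..n}. Vs i)"

definition attach_E :: "nat \<Rightarrow> 'a set set \<Rightarrow> (nat \<Rightarrow> 'a set set) \<Rightarrow> 'a set set" where
  "attach_E n E Es = E \<union> (\<Union>i\<in>{1..n}. Es i)"

end

theory Submission
  imports Defs
begin

text \<open>The vertex sets of the G_i partition the vertices of H = G(G_1,...,G_n), and every edge of H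
  off the roots x_i lies inside some G_i. Hence a maximal independent set S of H meets each G_i in
  a maximal independent set of G_i (if x_i \<in> S) or of G_i - x_i (if x_i \<notin> S); conversely such
  pieces glue to a maximal independent set of H when the chosen roots are independent in G and
  every root left out of its piece is dominated either inside G_i or by a chosen neighbouring root.

  Because G_i is connected with at least two vertices, a neighbour of x_i extends to a maximal
  independent set W_i of G_i - x_i that is also maximal in G_i. If all G_i and G_i - x_i are unmixed,
  every maximal independent set of H thus has |W_1| + ... + |W_n| elements. Conversely, gluing an
  arbitrary maximal independent set of G_i to the W_k (k \<noteq> i) shows G_i unmixed; for G_i - x_i the
  root x_i is dominated instead by a neighbour x_j in G (no vertex of G is isolated), whose piece is
  a maximal independent set of G_j through x_j.\<close>

lemma maximal_independent_set_iff_dominating: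
  assumes "\<forall>e\<in>E. card e = 2"
  shows "maximal_independent_set V E S \<longleftrightarrow>
           independent_set V E S \<and> (\<forall>v\<in>V - S. \<exists>u\<in>S. {u, v} \<in> E)"
proof
  assume mis: "maximal_independent_set V E S"
  then have ind: "independent_set V E S" by (simp add: maximal_independent_set_def)
  have "\<exists>u\<in>S. {u, v} \<in> E" if v: "v \<in> V - S" for v
  proof (rule ccontr)
    assume no_nbr: "\<not> (\<exists>u\<in>S. {u, v} \<in> E)"
    have "independent_set V E (insert v S)"
      unfolding independent_set_def
    proof (intro conjI ballI notI)
      show "insert v S \<subseteq> V" using v ind by (auto simp: independent_set_def)
    next
      fix e assume e: "e \<in> E" "e \<subseteq> insert v S"
      obtain a b where ab: "e = {a, b}" "a \<noteq> b" using assms e(1) by (auto simp: card_2_iff)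
      show False
      proof (cases "v \<in> e")
        case True
        then obtain u where "e = {u, v}" "u \<in> S" using ab e(2) by (auto simp: insert_commute)
        then show False using no_nbr e(1) by blast
      next
        case False
        then show False using e ind by (auto simp: independent_set_def)
      qed
    qed
    then show False using mis v unfolding maximal_independent_set_def by blast
  qed
  then show "independent_set V E S \<and> (\<forall>v\<in>V - S. \<exists>u\<in>S. {u, v} \<in> E)" using ind by blast
next
  assume dom: "independent_set V E S \<and> (\<forall>v\<in>V - S. \<exists>u\<in>S. {u, v} \<in> E)"
  have "T = S" if T: "independent_set V E T" "S \<subseteq> T" for T
  proof (rule ccontr)
    assume "T \<noteq> S"
    then obtain v where "v \<in> T" "v \<in> V - S" using T by (auto simp: independent_set_def)
    then obtain u where "u \<in> S" "{u, v} \<in> E" using dom by blast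
    then show False using T \<open>v \<in> T\<close> by (auto simp: independent_set_def)
  qed
  then show "maximal_independent_set V E S" using dom by (auto simp: maximal_independent_set_def)
qed

lemma maximal_independent_set_del_vertex_iff_dominating:
  assumes "\<forall>e\<in>E. card e = 2"
  shows "maximal_independent_set (del_vertex_V V x) (del_vertex_E E x) S \<longleftrightarrow>
           independent_set V E S \<and> x \<notin> S \<and> (\<forall>v\<in>V - {x} - S. \<exists>u\<in>S. {u, v} \<in> E)"
proof -
  have edges: "\<forall>e\<in>del_vertex_E E x. card e = 2" using assms by (simp add: del_vertex_E_def)
  show ?thesis
    unfolding maximal_independent_set_iff_dominating[OF edges] del_vertex_V_def
    by (auto simp: independent_set_def del_vertex_E_def)
qed

lemma maximal_independent_set_del_vertex_subset:
  "maximal_independent_set (del_vertex_V V x) E' W \<Longrightarrow> W \<subseteq> V - {x}"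
  by (simp add: maximal_independent_set_def independent_set_def del_vertex_V_def)

lemma independent_set_extends_to_maximal:
  assumes "finite V" "independent_set V E S"
  obtains M where "S \<subseteq> M" "maximal_independent_set V E M"
  using assms(2)
proof (induction "card (V - S)" arbitrary: S rule: less_induct)
  case less
  show ?case
  proof (cases "maximal_independent_set V E S")
    case True
    then show ?thesis using less.prems by blast
  next
    case False
    then obtain T where T: "independent_set V E T" "S \<subset> T"
      using less.prems by (auto simp: maximal_independent_set_def)
    have "card (V - T) < card (V - S)"
      using T assms(1) by (intro psubset_card_mono) (auto simp: independent_set_def)
    then show ?thesis using less.hyps[OF _ _ T(1)] less.prems(1) T(2) by blast
  qed
qed

lemma ex_maximal_independent_set_containing:
  assumes "simple_graph V E" "v \<in> V"
  obtains M where "v \<in> M" "maximal_independent_set V E M"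
proof -
  have "independent_set V E {v}"
    using assms unfolding independent_set_def simple_graph_def by (auto simp: subset_singleton_iff)
  then show ?thesis
    using that assms(1) by (auto simp: simple_graph_def elim: independent_set_extends_to_maximal)
qed

lemma connected_graph_ex_neighbour:
  assumes "simple_graph V E" "connected_graph V E" "x \<in> V" "card V \<ge> 2"
  obtains y where "{x, y} \<in> E"
proof -
  obtain v where v: "v \<in> V" "v \<noteq> x"
    using assms(3,4) by (metis card_2_iff' obtain_subset_with_card_n subset_eq)
  let ?R = "\<lambda>a b. adjacent E a b \<and> a \<in> V \<and> b \<in> V"
  have "?R\<^sup>*\<^sup>* x v" using assms(2,3) v(1) unfolding connected_graph_def by blast
  then have "\<exists>y. ?R x y" using v(2) by (induction rule: converse_rtranclp_induct) blast+
  then show ?thesis using that unfolding adjacent_def by blast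
qed

lemma ex_common_maximal_independent_set_del_vertex:
  assumes "simple_graph V E" "connected_graph V E" "x \<in> V" "card V \<ge> 2"
  obtains W where "maximal_independent_set V E W"
    and "maximal_independent_set (del_vertex_V V x) (del_vertex_E E x) W"
proof -
  have edges: "\<forall>e\<in>E. card e = 2" and fin: "finite V" and sub: "\<forall>e\<in>E. e \<subseteq> V"
    using assms(1) by (simp_all add: simple_graph_def)
  obtain y where y: "{x, y} \<in> E" using connected_graph_ex_neighbour[OF assms] .
  have "y \<noteq> x" "y \<in> V" using y edges sub by fastforce+
  then have "independent_set (del_vertex_V V x) (del_vertex_E E x) {y}"
    using edges by (auto simp: independent_set_def del_vertex_V_def del_vertex_E_def subset_singleton_iff)
  moreover have "finite (del_vertex_V V x)" using fin by (simp add: del_vertex_V_def)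
  ultimately obtain W where W: "y \<in> W" "maximal_independent_set (del_vertex_V V x) (del_vertex_E E x) W"
    by (auto elim: independent_set_extends_to_maximal)
  then have "maximal_independent_set V E W"
    using y unfolding maximal_independent_set_del_vertex_iff_dominating[OF edges]
      maximal_independent_set_iff_dominating[OF edges]
    by (metis Diff_iff insert_commute singletonD)
  then show ?thesis using that W(2) by blast
qed

lemma card_eq_of_common_maximal_independent_set:
  assumes "unmixed V E" "unmixed (del_vertex_V V x) (del_vertex_E E x)"
    and "maximal_independent_set V E W"
    and "maximal_independent_set (del_vertex_V V x) (del_vertex_E E x) W"
    and "maximal_independent_set V E S \<or>
         maximal_independent_set (del_vertex_V V x) (del_vertex_E E x) S"
  shows "card S = card W"
  using assms unfolding unmixed_def by blast

lemma unmixed_if_maximal_independent_sets_shift: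
  assumes "unmixed V' E'"
    and "\<And>T. maximal_independent_set V E T \<Longrightarrow>
           maximal_independent_set V' E' (f T) \<and> card (f T) = card T + c"
  shows "unmixed V E"
  unfolding unmixed_def
proof (intro allI impI)
  fix S T assume "maximal_independent_set V E S \<and> maximal_independent_set V E T"
  then have "card (f S) = card (f T)" "card (f S) = card S + c" "card (f T) = card T + c"
    using assms unfolding unmixed_def by blast+
  then show "card S = card T" by simp
qed

locale graph_attachment =
  fixes n :: nat and x :: "nat \<Rightarrow> 'a" and E :: "'a set set"
    and Vs :: "nat \<Rightarrow> 'a set" and Es :: "nat \<Rightarrow> 'a set set"
  assumes x_inj: "inj_on x {1..n}"
    and G: "simple_graph (x ` {1..n}) E"
    and G_noiso: "no_isolated_vertex (x ` {1..n}) E"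
    and Gi: "\<And>i. i \<in> {1..n} \<Longrightarrow> simple_graph (Vs i) (Es i)"
    and Gi_conn: "\<And>i. i \<in> {1..n} \<Longrightarrow> connected_graph (Vs i) (Es i)"
    and root: "\<And>i. i \<in> {1..n} \<Longrightarrow> x i \<in> Vs i"
    and size: "\<And>i. i \<in> {1..n} \<Longrightarrow> card (Vs i) \<ge> 2"
    and disj: "\<And>i j. i \<in> {1..n} \<Longrightarrow> j \<in> {1..n} \<Longrightarrow> i \<noteq> j \<Longrightarrow>
                  (Vs i - {x i}) \<inter> (Vs j - {x j}) = {}"
    and disjG: "\<And>i. i \<in> {1..n} \<Longrightarrow> (Vs i - {x i}) \<inter> x ` {1..n} = {}"
begin

abbreviation "I \<equiv> {1..n}"
abbreviation "VH \<equiv> attach_V n (x ` I) Vs"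
abbreviation "EH \<equiv> attach_E n E Es"

lemma root_mem_Vs_imp_eq:
  assumes "k \<in> I" "l \<in> I" "x k \<in> Vs l"
  shows "k = l"
proof (rule ccontr)
  assume "k \<noteq> l"
  then have "x k \<noteq> x l" using assms(1,2) x_inj by (meson inj_onD)
  then have "x k \<in> (Vs l - {x l}) \<inter> x ` I" using assms by blast
  then show False using disjG[OF assms(2)] by blast
qed

lemma Vs_disjoint:
  assumes "k \<in> I" "l \<in> I" "k \<noteq> l"
  shows "Vs k \<inter> Vs l = {}"
  using disj[OF assms] root_mem_Vs_imp_eq assms root by blast

lemma VH_eq_Union_Vs: "VH = (\<Union>k\<in>I. Vs k)"
  using root by (auto simp: attach_V_def)

lemma card_EH_edge: "\<forall>e\<in>EH. card e = 2"
  using G Gi by (auto simp: attach_E_def simple_graph_def)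

lemma card_Es_edge: "k \<in> I \<Longrightarrow> \<forall>e\<in>Es k. card e = 2"
  using Gi by (simp add: simple_graph_def)

lemma Es_subset_Vs: "k \<in> I \<Longrightarrow> e \<in> Es k \<Longrightarrow> e \<subseteq> Vs k"
  using Gi by (simp add: simple_graph_def)

lemma loop_notin_E: "{a, a} \<notin> E"
  using G by (auto simp: simple_graph_def)

lemma EH_edge_at_nonroot:
  assumes "k \<in> I" "v \<in> Vs k" "v \<noteq> x k" "{u, v} \<in> EH"
  shows "{u, v} \<in> Es k"
proof -
  have "{u, v} \<notin> E"
  proof
    assume "{u, v} \<in> E"
    then have "v \<in> x ` I" using G by (auto simp: simple_graph_def)
    then show False using disjG[OF assms(1)] assms(2,3) by blast
  qed
  then obtain l where l: "l \<in> I" "{u, v} \<in> Es l" using assms(4) by (auto simp: attach_E_def)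
  then have "l = k" using Vs_disjoint Es_subset_Vs assms(1,2) by blast
  then show ?thesis using l by simp
qed

lemma ex_root_neighbour:
  assumes "i \<in> I"
  obtains j where "j \<in> I" "j \<noteq> i" "{x j, x i} \<in> E"
proof -
  obtain e where e: "e \<in> E" "x i \<in> e"
    using G_noiso assms unfolding no_isolated_vertex_def by blast
  then obtain b where "e = {b, x i}" "b \<noteq> x i" "b \<in> x ` I"
    using G by (auto simp: simple_graph_def card_2_iff doubleton_eq_iff)
  then show ?thesis using that e(1) by blast
qed

lemma card_Union_pieces:
  assumes "\<And>k. k \<in> I \<Longrightarrow> P k \<subseteq> Vs k"
  shows "card (\<Union>k\<in>I. P k) = (\<Sum>k\<in>I. card (P k))"
proof (rule card_UN_disjoint)
  show "\<forall>k\<in>I. finite (P k)"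
    using assms Gi by (meson finite_subset simple_graph_def)
  show "\<forall>k\<in>I. \<forall>l\<in>I. k \<noteq> l \<longrightarrow> P k \<inter> P l = {}"
    using assms Vs_disjoint by blast
qed simp

lemma card_Union_pieces_update:
  assumes "\<And>k. k \<in> I \<Longrightarrow> P k \<subseteq> Vs k" "i \<in> I" "T \<subseteq> Vs i"
  shows "card (\<Union>k\<in>I. (P(i := T)) k) = card T + (\<Sum>k\<in>I - {i}. card (P k))"
proof -
  have "card (\<Union>k\<in>I. (P(i := T)) k) = (\<Sum>k\<in>I. card ((P(i := T)) k))"
    using assms by (intro card_Union_pieces) auto
  also have "\<dots> = card T + (\<Sum>k\<in>I - {i}. card ((P(i := T)) k))"
    using assms(2) by (simp add: sum.remove)
  also have "(\<Sum>k\<in>I - {i}. card ((P(i := T)) k)) = (\<Sum>k\<in>I - {i}. card (P k))"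
    by (rule sum.cong) auto
  finally show ?thesis .
qed

lemma maximal_independent_set_restrict:
  assumes S: "maximal_independent_set VH EH S" and k: "k \<in> I"
  shows "x k \<in> S \<Longrightarrow> maximal_independent_set (Vs k) (Es k) (S \<inter> Vs k)"
    and "x k \<notin> S \<Longrightarrow>
           maximal_independent_set (del_vertex_V (Vs k) (x k)) (del_vertex_E (Es k) (x k)) (S \<inter> Vs k)"
proof -
  have indH: "independent_set VH EH S" and domH: "\<forall>v\<in>VH - S. \<exists>u\<in>S. {u, v} \<in> EH"
    using S unfolding maximal_independent_set_iff_dominating[OF card_EH_edge] by blast+
  have "Es k \<subseteq> EH" using k by (auto simp: attach_E_def)
  then have ind: "independent_set (Vs k) (Es k) (S \<inter> Vs k)"
    using indH by (auto simp: independent_set_def)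
  have dom: "\<forall>v\<in>Vs k - {x k} - S \<inter> Vs k. \<exists>u\<in>S \<inter> Vs k. {u, v} \<in> Es k"
  proof
    fix v assume v: "v \<in> Vs k - {x k} - S \<inter> Vs k"
    then have "v \<in> VH - S" unfolding VH_eq_Union_Vs using k by blast
    then obtain u where "u \<in> S" "{u, v} \<in> EH" using domH by blast
    moreover from this have "{u, v} \<in> Es k" using EH_edge_at_nonroot k v by blast
    ultimately show "\<exists>u\<in>S \<inter> Vs k. {u, v} \<in> Es k" using Es_subset_Vs[OF k] by blast
  qed
  show "maximal_independent_set (Vs k) (Es k) (S \<inter> Vs k)" if "x k \<in> S"
  proof -
    have "Vs k - S \<inter> Vs k = Vs k - {x k} - S \<inter> Vs k" using that by blast
    then show ?thesis
      unfolding maximal_independent_set_iff_dominating[OF card_Es_edge[OF k]] using ind dom by simp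
  qed
  show "maximal_independent_set (del_vertex_V (Vs k) (x k)) (del_vertex_E (Es k) (x k)) (S \<inter> Vs k)"
    if "x k \<notin> S"
    unfolding maximal_independent_set_del_vertex_iff_dominating[OF card_Es_edge[OF k]]
    using ind dom that by simp
qed

lemma maximal_independent_set_glue:
  assumes pieces: "\<And>k. k \<in> I \<Longrightarrow> maximal_independent_set (Vs k) (Es k) (P k) \<or>
      maximal_independent_set (del_vertex_V (Vs k) (x k)) (del_vertex_E (Es k) (x k)) (P k) \<and>
      (\<exists>j\<in>I. x j \<in> P j \<and> {x j, x k} \<in> E)"
    and roots_independent: "\<And>k l. k \<in> I \<Longrightarrow> l \<in> I \<Longrightarrow> x k \<in> P k \<Longrightarrow> x l \<in> P l \<Longrightarrow>
      {x k, x l} \<notin> E"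
  shows "maximal_independent_set VH EH (\<Union>k\<in>I. P k)"
proof -
  let ?S = "\<Union>k\<in>I. P k"
  have ind: "independent_set (Vs k) (Es k) (P k)"
    and dom: "\<forall>v\<in>Vs k - P k. (\<exists>u\<in>P k. {u, v} \<in> Es k) \<or>
                 v = x k \<and> (\<exists>j\<in>I. x j \<in> P j \<and> {x j, x k} \<in> E)" if k: "k \<in> I" for k
    using pieces[OF k]
    unfolding maximal_independent_set_iff_dominating[OF card_Es_edge[OF k]]
      maximal_independent_set_del_vertex_iff_dominating[OF card_Es_edge[OF k]]
    by blast+
  have P_Vs: "P k \<subseteq> Vs k" if "k \<in> I" for k
    using ind[OF that] by (simp add: independent_set_def)
  have S_Vs: "?S \<inter> Vs k = P k" if k: "k \<in> I" for k
    using P_Vs Vs_disjoint k by blast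
  have "independent_set VH EH ?S"
    unfolding independent_set_def
  proof (intro conjI ballI notI)
    show "?S \<subseteq> VH" using P_Vs VH_eq_Union_Vs by blast
  next
    fix e assume e: "e \<in> EH" "e \<subseteq> ?S"
    show False
    proof (cases "e \<in> E")
      case True
      then obtain a b where "e = {a, b}" "a \<in> x ` I" "b \<in> x ` I"
        using G by (auto simp: simple_graph_def card_2_iff)
      then obtain k l where kl: "k \<in> I" "l \<in> I" "e = {x k, x l}" by blast
      then have "x k \<in> ?S \<inter> Vs k" "x l \<in> ?S \<inter> Vs l" using e(2) root by auto
      then have "x k \<in> P k" "x l \<in> P l" by (simp_all only: S_Vs kl(1,2))
      then show False using roots_independent kl True by blast
    next
      case False
      then obtain k where k: "k \<in> I" "e \<in> Es k" using e(1) by (auto simp: attach_E_def)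
      then have "e \<subseteq> P k" using e(2) S_Vs Es_subset_Vs by blast
      then show False using ind k by (auto simp: independent_set_def)
    qed
  qed
  moreover have "\<exists>u\<in>?S. {u, v} \<in> EH" if v: "v \<in> VH - ?S" for v
  proof -
    obtain k where k: "k \<in> I" "v \<in> Vs k - P k" using v VH_eq_Union_Vs by blast
    then consider u where "u \<in> P k" "{u, v} \<in> Es k" | j where "j \<in> I" "x j \<in> P j" "{x j, v} \<in> E"
      using dom by blast
    then show ?thesis
    proof cases
      case 1
      then show ?thesis using k(1) unfolding attach_E_def by blast
    next
      case 2
      then show ?thesis unfolding attach_E_def by blast
    qed
  qed
  ultimately show ?thesis
    unfolding maximal_independent_set_iff_dominating[OF card_EH_edge] by blast
qed

lemma ex_common_maximal_independent_sets:
  obtains W where "\<And>k. k \<in> I \<Longrightarrow> maximal_independent_set (Vs k) (Es k) (W k)"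
    and "\<And>k. k \<in> I \<Longrightarrow>
           maximal_independent_set (del_vertex_V (Vs k) (x k)) (del_vertex_E (Es k) (x k)) (W k)"
proof -
  have "\<forall>k\<in>I. \<exists>W. maximal_independent_set (Vs k) (Es k) W \<and>
           maximal_independent_set (del_vertex_V (Vs k) (x k)) (del_vertex_E (Es k) (x k)) W"
    by (metis ex_common_maximal_independent_set_del_vertex Gi Gi_conn root size)
  then have "\<exists>W. \<forall>k\<in>I. maximal_independent_set (Vs k) (Es k) (W k) \<and>
      maximal_independent_set (del_vertex_V (Vs k) (x k)) (del_vertex_E (Es k) (x k)) (W k)"
    by (rule bchoice)
  then show ?thesis using that by blast
qed

lemma unmixed_attachment_if_unmixed_parts:
  assumes "\<And>k. k \<in> I \<Longrightarrow> unmixed (Vs k) (Es k) \<and>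
             unmixed (del_vertex_V (Vs k) (x k)) (del_vertex_E (Es k) (x k))"
  shows "unmixed VH EH"
proof -
  obtain W where W: "\<And>k. k \<in> I \<Longrightarrow> maximal_independent_set (Vs k) (Es k) (W k)"
    "\<And>k. k \<in> I \<Longrightarrow>
       maximal_independent_set (del_vertex_V (Vs k) (x k)) (del_vertex_E (Es k) (x k)) (W k)"
    using ex_common_maximal_independent_sets by blast
  have "card S = (\<Sum>k\<in>I. card (W k))" if S: "maximal_independent_set VH EH S" for S
  proof -
    have "S = (\<Union>k\<in>I. S \<inter> Vs k)"
      using S VH_eq_Union_Vs by (auto simp: maximal_independent_set_def independent_set_def)
    then have "card S = (\<Sum>k\<in>I. card (S \<inter> Vs k))"
      using card_Union_pieces[of "\<lambda>k. S \<inter> Vs k"] by simp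
    also have "\<dots> = (\<Sum>k\<in>I. card (W k))"
    proof (rule sum.cong)
      fix k assume k: "k \<in> I"
      show "card (S \<inter> Vs k) = card (W k)"
        using card_eq_of_common_maximal_independent_set[OF assms[OF k, THEN conjunct1]
            assms[OF k, THEN conjunct2] W[OF k]]
          maximal_independent_set_restrict[OF S k] by blast
    qed simp
    finally show ?thesis .
  qed
  then show ?thesis unfolding unmixed_def by simp
qed

lemma unmixed_part_if_unmixed_attachment:
  assumes H: "unmixed VH EH" and i: "i \<in> I"
  shows "unmixed (Vs i) (Es i)"
proof -
  obtain W where W: "\<And>k. k \<in> I \<Longrightarrow> maximal_independent_set (Vs k) (Es k) (W k)"
    and W_del: "\<And>k. k \<in> I \<Longrightarrow>
       maximal_independent_set (del_vertex_V (Vs k) (x k)) (del_vertex_E (Es k) (x k)) (W k)"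
    using ex_common_maximal_independent_sets by blast
  have W_sub: "W k \<subseteq> Vs k" and W_root: "x k \<notin> W k" if "k \<in> I" for k
    using maximal_independent_set_del_vertex_subset[OF W_del[OF that]] by auto
  show ?thesis
  proof (rule unmixed_if_maximal_independent_sets_shift[OF H])
    fix T assume T: "maximal_independent_set (Vs i) (Es i) T"
    then have T_sub: "T \<subseteq> Vs i" by (simp add: maximal_independent_set_def independent_set_def)
    have "maximal_independent_set VH EH (\<Union>k\<in>I. (W(i := T)) k)"
      by (rule maximal_independent_set_glue)
        (use T W W_root loop_notin_E in \<open>auto split: if_splits\<close>)
    then show "maximal_independent_set VH EH (\<Union>k\<in>I. (W(i := T)) k) \<and>
        card (\<Union>k\<in>I. (W(i := T)) k) = card T + (\<Sum>k\<in>I - {i}. card (W k))"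
      using card_Union_pieces_update[OF W_sub i T_sub] by simp
  qed
qed

lemma unmixed_del_vertex_part_if_unmixed_attachment:
  assumes H: "unmixed VH EH" and i: "i \<in> I"
  shows "unmixed (del_vertex_V (Vs i) (x i)) (del_vertex_E (Es i) (x i))"
proof -
  obtain W where W: "\<And>k. k \<in> I \<Longrightarrow> maximal_independent_set (Vs k) (Es k) (W k)"
    and W_del: "\<And>k. k \<in> I \<Longrightarrow>
       maximal_independent_set (del_vertex_V (Vs k) (x k)) (del_vertex_E (Es k) (x k)) (W k)"
    using ex_common_maximal_independent_sets by blast
  have W_sub: "W k \<subseteq> Vs k" and W_root: "x k \<notin> W k" if "k \<in> I" for k
    using maximal_independent_set_del_vertex_subset[OF W_del[OF that]] by auto
  obtain j where j: "j \<in> I" "j \<noteq> i" "{x j, x i} \<in> E"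
    using ex_root_neighbour[OF i] .
  obtain U where U: "x j \<in> U" "maximal_independent_set (Vs j) (Es j) U"
    using ex_maximal_independent_set_containing[OF Gi[OF j(1)] root[OF j(1)]] .
  let ?P = "W(j := U)"
  have P_sub: "?P k \<subseteq> Vs k" if "k \<in> I" for k
    using W_sub[OF that] U(2) by (auto simp: maximal_independent_set_def independent_set_def)
  show ?thesis
  proof (rule unmixed_if_maximal_independent_sets_shift[OF H])
    fix T assume T: "maximal_independent_set (del_vertex_V (Vs i) (x i)) (del_vertex_E (Es i) (x i)) T"
    then have T_sub: "T \<subseteq> Vs i" and T_root: "x i \<notin> T"
      using maximal_independent_set_del_vertex_subset[OF T] by auto
    have "maximal_independent_set VH EH (\<Union>k\<in>I. (?P(i := T)) k)"
      by (rule maximal_independent_set_glue)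
        (use T U W W_root T_root j loop_notin_E in \<open>auto split: if_splits\<close>)
    then show "maximal_independent_set VH EH (\<Union>k\<in>I. (?P(i := T)) k) \<and>
        card (\<Union>k\<in>I. (?P(i := T)) k) = card T + (\<Sum>k\<in>I - {i}. card (?P k))"
      using card_Union_pieces_update[OF P_sub i T_sub] by simp
  qed
qed

end

theorem proposition3p2:
  fixes n :: nat and x :: "nat \<Rightarrow> 'a" and E :: "'a set set"
    and Vs :: "nat \<Rightarrow> 'a set" and Es :: "nat \<Rightarrow> 'a set set"
  assumes x_inj: "inj_on x {1..n}"
    and G: "simple_graph (x ` {1..n}) E"
    and G_noiso: "no_isolated_vertex (x ` {1..n}) E"
    and Gi: "\<And>i. i \<in> {1..n} \<Longrightarrow> simple_graph (Vs i) (Es i)"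
    and Gi_conn: "\<And>i. i \<in> {1..n} \<Longrightarrow> connected_graph (Vs i) (Es i)"
    and root: "\<And>i. i \<in> {1..n} \<Longrightarrow> x i \<in> Vs i"
    and size: "\<And>i. i \<in> {1..n} \<Longrightarrow> card (Vs i) \<ge> 2"
    and disj: "\<And>i j. i \<in> {1..n} \<Longrightarrow> j \<in> {1..n} \<Longrightarrow> i \<noteq> j \<Longrightarrow>
                  (Vs i - {x i}) \<inter> (Vs j - {x j}) = {}"
    and disjG: "\<And>i. i \<in> {1..n} \<Longrightarrow> (Vs i - {x i}) \<inter> x ` {1..n} = {}"
  shows "unmixed (attach_V n (x ` {1..n}) Vs) (attach_E n E Es) \<longleftrightarrow>
         (\<forall>i\<in>{1..n}. unmixed (Vs i) (Es i) \<and>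
             unmixed (del_vertex_V (Vs i) (x i)) (del_vertex_E (Es i) (x i)))"
proof -
  interpret graph_attachment n x E Vs Es
    using assms by (rule graph_attachment.intro)
  show ?thesis
    using unmixed_attachment_if_unmixed_parts unmixed_part_if_unmixed_attachment
      unmixed_del_vertex_part_if_unmixed_attachment by blast
qed

end
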